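(* Let $\mathcal{CS}$ be a variant closed constant specification for the basic system and $\mathcal{CS}(\mathbf V)$ its extension to $\mathit{Fml}_J(\mathbf V)$. For every basic formula $\varphi\in\mathit{Fml}_J$, if $\vdash_{\mathcal{CS}(\mathbf V)}\varphi$ then $\vdash_{\mathcal{CS}}\varphi$.
   Context: Syntax of FOLPb: terms $t::=p_i\mid c\mid t\cdot t\mid t+t\mid !t\mid\mathsf b(t)\mid\mathsf{gen}_x(t)$; formulas $Px_1\dots x_n\mid\bot\mid\varphi\to\varphi\mid\forall x\varphi\mid t{:}_X\varphi$ with $X$ a finite set of individual variables, $fv(t{:}_X\psi)=X$; $\mathit{Fml}_J$ is the set of these (basic) formulas. Axiom schemes: A1 classical first-order; A2 $t{:}_{Xy}\varphi\to t{:}_X\varphi$ ($y$ not free in $\varphi$); A3 $t{:}_X\varphi\to t{:}_{Xy}\varphi$; B1 $t{:}_X\varphi\to\varphi$; B2 $t{:}_X(\varphi\to\psi)\to(s{:}_X\varphi\to[t\cdot s]{:}_X\psi)$; B3 $t{:}_X\varphi\to[t+s]{:}_X\varphi$, $s{:}_X\varphi\to[t+s]{:}_X\varphi$; B4 $t{:}_X\varphi\to!t{:}_Xt{:}_X\varphi$; B5 $t{:}_X\varphi\to\mathsf{gen}_x(t){:}_X\forall x\varphi$ ($x\notin X$); Bb $\forall y\,t{:}_{Xy}\varphi(y)\to\mathsf b(t){:}_X\forall y\varphi(y)$; rules modus ponens and generalization. A constant specification $\mathcal{CS}$ is a set of $c{:}\psi$ with $\psi$ an axiom; $\vdash_{\mathcal{CS}}$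 is provability with $\mathcal{CS}$ added. $\mathcal{CS}$ is variant closed if $c{:}\varphi\in\mathcal{CS}\iff c{:}\psi\in\mathcal{CS}$ whenever $\varphi,\psi$ differ by a one-to-one onto renaming of free individual variables. Henkin language: $\mathbf V$ is a countable set of new witness variables, which may occur free (as predicate arguments and in subscript sets) but are never quantified nor used as $\mathsf{gen}$ subscripts; $\mathit{Fml}_J(\mathbf V)$ is the set of such Henkin formulas. $\mathcal{CS}(\mathbf V)$ is the set of all $c{:}\psi$ with $c{:}\varphi\in\mathcal{CS}$ and $\psi$ obtained from $\varphi$ by replacing some free basic variables by distinct witness variables. $\vdash_{\mathcal{CS}(\mathbf V)}$ is provability over $\mathit{Fml}_J(\mathbf V)$ with the same axiom schemes and rules and $\mathcal{CS}(\mathbf V)$ as additional axioms. *)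

theory Defs
  imports "HOL-Library.FSet"
begin

datatype var = BV nat | WV nat

definition isB :: "var \<Rightarrow> bool" where "isB v \<longleftrightarrow> (\<exists>n. v = BV n)"
definition isW :: "var \<Rightarrow> bool" where "isW v \<longleftrightarrow> (\<exists>n. v = WV n)"

datatype jt = PVar nat | JConst nat | JApp jt jt | JSum jt jt | JBang jt | JB jt | JGen var jt

text \<open>Formulas: P x1..xn, bottom, implication, universal quantifier, t:_X phi (X finite).\<close>
datatype fm = Pred nat "var list" | FBot | Imp fm fm | Forall var fm | Just jt "var fset" fm

fun fv :: "fm \<Rightarrow> var set" where
  "fv (Pred P xs) = set xs"
| "fv FBot = {}"
| "fv (Imp a b) = fv a \<union> fv b"
| "fv (Forall x a) = fv a - {x}"
| "fv (Just t X a) = fset X"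

fun tvars :: "jt \<Rightarrow> var set" where
  "tvars (PVar i) = {}"
| "tvars (JConst c) = {}"
| "tvars (JApp s t) = tvars s \<union> tvars t"
| "tvars (JSum s t) = tvars s \<union> tvars t"
| "tvars (JBang t) = tvars t"
| "tvars (JB t) = tvars t"
| "tvars (JGen x t) = insert x (tvars t)"

fun allvars :: "fm \<Rightarrow> var set" where
  "allvars (Pred P xs) = set xs"
| "allvars FBot = {}"
| "allvars (Imp a b) = allvars a \<union> allvars b"
| "allvars (Forall x a) = insert x (allvars a)"
| "allvars (Just t X a) = tvars t \<union> fset X \<union> allvars a"

definition basic :: "fm \<Rightarrow> bool" where
  "basic \<phi> \<longleftrightarrow> (\<forall>v\<in>allvars \<phi>. isB v)"

fun tgenB :: "jt \<Rightarrow> bool" where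
  "tgenB (PVar i) = True"
| "tgenB (JConst c) = True"
| "tgenB (JApp s t) = (tgenB s \<and> tgenB t)"
| "tgenB (JSum s t) = (tgenB s \<and> tgenB t)"
| "tgenB (JBang t) = tgenB t"
| "tgenB (JB t) = tgenB t"
| "tgenB (JGen x t) = (isB x \<and> tgenB t)"

fun henkin :: "fm \<Rightarrow> bool" where
  "henkin (Pred P xs) = True"
| "henkin FBot = True"
| "henkin (Imp a b) = (henkin a \<and> henkin b)"
| "henkin (Forall x a) = (isB x \<and> henkin a)"
| "henkin (Just t X a) = (tgenB t \<and> henkin a)"

text \<open>Simultaneous substitution of variables for the free variables of a formula
  (the free variables of t:_X a are those in X; proof terms are not affected).\<close>
fun substf :: "(var \<Rightarrow> var) \<Rightarrow> fm \<Rightarrow> fm" where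
  "substf \<sigma> (Pred P xs) = Pred P (map \<sigma> xs)"
| "substf \<sigma> FBot = FBot"
| "substf \<sigma> (Imp a b) = Imp (substf \<sigma> a) (substf \<sigma> b)"
| "substf \<sigma> (Forall z a) = Forall z (substf (\<sigma>(z := z)) a)"
| "substf \<sigma> (Just t X a) =
     Just t (fimage \<sigma> X) (substf (\<lambda>v. if v |\<in>| X then \<sigma> v else v) a)"

fun sfree :: "(var \<Rightarrow> var) \<Rightarrow> fm \<Rightarrow> bool" where
  "sfree \<sigma> (Pred P xs) = True"
| "sfree \<sigma> FBot = True"
| "sfree \<sigma> (Imp a b) = (sfree \<sigma> a \<and> sfree \<sigma> b)"
| "sfree \<sigma> (Forall z a) = ((\<forall>v\<in>fv (Forall z a). \<sigma> v \<noteq> z) \<and> sfree (\<sigma>(z := z)) a)"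
| "sfree \<sigma> (Just t X a) =
     ((\<forall>v\<in>fset X. \<sigma> v \<notin> fv a - fset X) \<and> sfree (\<lambda>v. if v |\<in>| X then \<sigma> v else v) a)"

inductive ax :: "fm \<Rightarrow> bool" where
  \<comment> \<open>A1: classical first-order logic (Hilbert-style, complete with MP and Gen)\<close>
  A1_K: "ax (Imp a (Imp b a))"
| A1_S: "ax (Imp (Imp a (Imp b c)) (Imp (Imp a b) (Imp a c)))"
| A1_DN: "ax (Imp (Imp (Imp a FBot) FBot) a)"
| A1_inst: "sfree (id(x := y)) a \<Longrightarrow> ax (Imp (Forall x a) (substf (id(x := y)) a))"
| A1_dist: "x \<notin> fv a \<Longrightarrow> ax (Imp (Forall x (Imp a b)) (Imp a (Forall x b)))"
| A2: "y \<notin> fv a \<Longrightarrow> y |\<notin>| X \<Longrightarrow> ax (Imp (Just t (finsert y X) a) (Just t X a))"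
| A3: "y |\<notin>| X \<Longrightarrow> ax (Imp (Just t X a) (Just t (finsert y X) a))"
| B1: "ax (Imp (Just t X a) a)"
| B2: "ax (Imp (Just t X (Imp a b)) (Imp (Just s X a) (Just (JApp t s) X b)))"
| B3l: "ax (Imp (Just t X a) (Just (JSum t s) X a))"
| B3r: "ax (Imp (Just s X a) (Just (JSum t s) X a))"
| B4: "ax (Imp (Just t X a) (Just (JBang t) X (Just t X a)))"
| B5: "x |\<notin>| X \<Longrightarrow> ax (Imp (Just t X a) (Just (JGen x t) X (Forall x a)))"
| Bb: "y |\<notin>| X \<Longrightarrow> ax (Imp (Forall y (Just t (finsert y X) a)) (Just (JB t) X (Forall y a)))"

inductive prv :: "(fm \<Rightarrow> bool) \<Rightarrow> fm set \<Rightarrow> fm \<Rightarrow> bool" for L A where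
  prv_ax: "ax \<phi> \<Longrightarrow> L \<phi> \<Longrightarrow> prv L A \<phi>"
| prv_cs: "\<phi> \<in> A \<Longrightarrow> prv L A \<phi>"
| prv_mp: "prv L A (Imp \<phi> \<psi>) \<Longrightarrow> prv L A \<phi> \<Longrightarrow> prv L A \<psi>"
| prv_gen: "prv L A \<phi> \<Longrightarrow> L (Forall x \<phi>) \<Longrightarrow> prv L A (Forall x \<phi>)"

text \<open>A constant specification is given as a set of pairs (c, psi), standing for c:psi,
  i.e. the formula c:_{} psi.\<close>
definition const_spec :: "(nat \<times> fm) set \<Rightarrow> bool" where
  "const_spec CS \<longleftrightarrow> (\<forall>(c, \<psi>) \<in> CS. ax \<psi> \<and> basic \<psi>)"

definition csfml :: "(nat \<times> fm) set \<Rightarrow> fm set" where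
  "csfml CS = {Just (JConst c) {||} \<psi> | c \<psi>. (c, \<psi>) \<in> CS}"

definition variant :: "fm \<Rightarrow> fm \<Rightarrow> bool" where
  "variant \<phi> \<psi> \<longleftrightarrow> basic \<phi> \<and> basic \<psi> \<and>
     (\<exists>\<sigma>. inj_on \<sigma> (fv \<phi>) \<and> sfree \<sigma> \<phi> \<and> \<psi> = substf \<sigma> \<phi>)"

definition variant_closed :: "(nat \<times> fm) set \<Rightarrow> bool" where
  "variant_closed CS \<longleftrightarrow>
     (\<forall>c \<phi> \<psi>. variant \<phi> \<psi> \<longrightarrow> ((c, \<phi>) \<in> CS \<longleftrightarrow> (c, \<psi>) \<in> CS))"

definition replaceW :: "(var \<Rightarrow> var) \<Rightarrow> fm \<Rightarrow> bool" where
  "replaceW \<sigma> \<phi> \<longleftrightarrow> (\<forall>v. \<sigma> v \<noteq> v \<longrightarrow> v \<in> fv \<phi> \<and> isB v \<and> isW (\<sigma> v)) \<and> inj_on \<sigma> (fv \<phi>)"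

definition CSV :: "(nat \<times> fm) set \<Rightarrow> (nat \<times> fm) set" where
  "CSV CS = {(c, substf \<sigma> \<phi>) | c \<phi> \<sigma>. (c, \<phi>) \<in> CS \<and> replaceW \<sigma> \<phi>}"

abbreviation prvCS :: "(nat \<times> fm) set \<Rightarrow> fm \<Rightarrow> bool" where
  "prvCS CS \<phi> \<equiv> prv basic (csfml CS) \<phi>"

abbreviation prvCSV :: "(nat \<times> fm) set \<Rightarrow> fm \<Rightarrow> bool" where
  "prvCSV CS \<phi> \<equiv> prv henkin (csfml (CSV CS)) \<phi>"

end

theory Submission
  imports Defs
begin

text \<open>A derivation in the Henkin language mentions only finitely many variables. Map them by a
  bijection of all variables that fixes the basic ones and sends the witness ones to fresh basic
  variables. Axioms stay axioms under bijective renaming (bound variables and gen subscripts are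
  renamed along with the free ones), and a Henkin instance of a specification axiom becomes a
  one-to-one renaming of a basic one, hence lies in CS by variant closure. So the renamed
  derivation is a basic one, and it ends in the original basic formula.\<close>

fun rename_jt :: "(var \<Rightarrow> var) \<Rightarrow> jt \<Rightarrow> jt" where
  "rename_jt r (PVar i) = PVar i"
| "rename_jt r (JConst c) = JConst c"
| "rename_jt r (JApp s t) = JApp (rename_jt r s) (rename_jt r t)"
| "rename_jt r (JSum s t) = JSum (rename_jt r s) (rename_jt r t)"
| "rename_jt r (JBang t) = JBang (rename_jt r t)"
| "rename_jt r (JB t) = JB (rename_jt r t)"
| "rename_jt r (JGen x t) = JGen (r x) (rename_jt r t)"

text \<open>Unlike substf, this renames every variable occurrence, bound ones included.\<close>
fun rename :: "(var \<Rightarrow> var) \<Rightarrow> fm \<Rightarrow> fm" where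
  "rename r (Pred P xs) = Pred P (map r xs)"
| "rename r FBot = FBot"
| "rename r (Imp a b) = Imp (rename r a) (rename r b)"
| "rename r (Forall x a) = Forall (r x) (rename r a)"
| "rename r (Just t X a) = Just (rename_jt r t) (fimage r X) (rename r a)"

lemma fv_rename: "inj r \<Longrightarrow> fv (rename r a) = r ` fv a"
  by (induction a) (auto simp: inj_eq)

lemma tvars_rename_jt: "tvars (rename_jt r t) = r ` tvars t"
  by (induction t) auto

lemma allvars_rename: "allvars (rename r a) = r ` allvars a"
  by (induction a) (auto simp: tvars_rename_jt)

lemma fv_subset_allvars: "fv a \<subseteq> allvars a"
  by (induction a) auto

lemma finite_tvars: "finite (tvars t)"
  by (induction t) auto

lemma finite_allvars: "finite (allvars a)"
  by (induction a) (auto simp: finite_tvars)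

lemma rename_jt_ident: "(\<And>v. v \<in> tvars t \<Longrightarrow> r v = v) \<Longrightarrow> rename_jt r t = t"
  by (induction t) auto

lemma rename_ident: "(\<And>v. v \<in> allvars a \<Longrightarrow> r v = v) \<Longrightarrow> rename r a = a"
proof (induction a)
  case (Just t X a)
  then show ?case by (auto simp: rename_jt_ident intro!: fset_eqI)
qed (auto simp: map_idI)

lemma basic_rename: "(\<And>v. v \<in> allvars a \<Longrightarrow> isB (r v)) \<Longrightarrow> basic (rename r a)"
  by (auto simp: basic_def allvars_rename)

lemma substf_cong: "\<forall>v\<in>allvars a. \<sigma> v = \<tau> v \<Longrightarrow> substf \<sigma> a = substf \<tau> a"
proof (induction a arbitrary: \<sigma> \<tau>)
  case (Forall z a)
  have "substf (\<sigma>(z := z)) a = substf (\<tau>(z := z)) a"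
    by (rule Forall.IH) (use Forall.prems in auto)
  then show ?case by simp
next
  case (Just t X a)
  have "substf (\<lambda>v. if v |\<in>| X then \<sigma> v else v) a = substf (\<lambda>v. if v |\<in>| X then \<tau> v else v) a"
    by (rule Just.IH) (use Just.prems in auto)
  moreover have "fimage \<sigma> X = fimage \<tau> X"
    using Just.prems by (auto intro!: fset_eqI)
  ultimately show ?case by simp
qed auto

lemma rename_substf_of_ident:
  "\<forall>v\<in>allvars a. r v = v \<Longrightarrow> rename r (substf \<sigma> a) = substf (r \<circ> \<sigma>) a"
proof (induction a arbitrary: \<sigma>)
  case (Forall z a)
  have "r \<circ> \<sigma>(z := z) = (r \<circ> \<sigma>)(z := z)"
    using Forall.prems by auto
  moreover have "rename r (substf (\<sigma>(z := z)) a) = substf (r \<circ> \<sigma>(z := z)) a"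
    by (rule Forall.IH) (use Forall.prems in auto)
  ultimately show ?case using Forall.prems by (simp only: substf.simps rename.simps) simp
next
  case (Just t X a)
  have "rename r (substf (\<lambda>v. if v |\<in>| X then \<sigma> v else v) a)
      = substf (r \<circ> (\<lambda>v. if v |\<in>| X then \<sigma> v else v)) a"
    by (rule Just.IH) (use Just.prems in auto)
  also have "\<dots> = substf (\<lambda>v. if v |\<in>| X then (r \<circ> \<sigma>) v else v) a"
    by (rule substf_cong) (use Just.prems in auto)
  finally have "rename r (substf (\<lambda>v. if v |\<in>| X then \<sigma> v else v) a)
      = substf (\<lambda>v. if v |\<in>| X then (r \<circ> \<sigma>) v else v) a" .
  moreover have "rename_jt r t = t"
    using Just.prems by (simp add: rename_jt_ident)
  moreover have "fimage r (fimage \<sigma> X) = fimage (r \<circ> \<sigma>) X"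
    by (simp add: fimage_fimage)
  ultimately show ?case
    by (simp only: substf.simps rename.simps)
qed auto

text \<open>Under a bijective renaming r, a substitution \<sigma> corresponds to its conjugate
  r \<circ> \<sigma> \<circ> inv r; the next two lemmas let the conjugation pass the two binders.\<close>

lemma conjugate_fun_upd:
  assumes "bij r"
  shows "r \<circ> \<sigma>(z := u) \<circ> inv r = (r \<circ> \<sigma> \<circ> inv r)(r z := r u)"
proof
  fix w
  show "(r \<circ> \<sigma>(z := u) \<circ> inv r) w = ((r \<circ> \<sigma> \<circ> inv r)(r z := r u)) w"
    using assms by (cases "w = r z") (auto simp: bij_is_inj bij_is_surj surj_f_inv_f)
qed

lemma conjugate_restrict:
  assumes "bij r"
  shows "r \<circ> (\<lambda>v. if v |\<in>| X then \<sigma> v else v) \<circ> inv r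
       = (\<lambda>w. if w |\<in>| fimage r X then (r \<circ> \<sigma> \<circ> inv r) w else w)"
proof
  fix w
  have "inv r w |\<in>| X \<longleftrightarrow> w |\<in>| fimage r X"
    using assms by (metis bij_inv_eq_iff fimageE fimageI)
  then show "(r \<circ> (\<lambda>v. if v |\<in>| X then \<sigma> v else v) \<circ> inv r) w
      = (if w |\<in>| fimage r X then (r \<circ> \<sigma> \<circ> inv r) w else w)"
    using assms by (auto simp: bij_is_surj surj_f_inv_f)
qed

lemma rename_substf:
  "bij r \<Longrightarrow> rename r (substf \<sigma> a) = substf (r \<circ> \<sigma> \<circ> inv r) (rename r a)"
proof (induction a arbitrary: \<sigma>)
  case (Forall z a)
  then show ?case
    using Forall.IH[of "\<sigma>(z := z)"] conjugate_fun_upd[of r \<sigma> z z]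
    by (simp only: substf.simps rename.simps)
next
  case (Just t X a)
  moreover have "fimage r (fimage \<sigma> X) = fimage (r \<circ> \<sigma> \<circ> inv r) (fimage r X)"
    using Just.prems by (auto simp: fimage_fimage bij_is_inj intro!: fset_eqI)
  ultimately show ?case
    using Just.IH[of "\<lambda>v. if v |\<in>| X then \<sigma> v else v"] conjugate_restrict[of r X \<sigma>]
    by (simp only: substf.simps rename.simps)
qed (auto simp: bij_is_inj)

lemma sfree_rename: "bij r \<Longrightarrow> sfree \<sigma> a \<Longrightarrow> sfree (r \<circ> \<sigma> \<circ> inv r) (rename r a)"
proof (induction a arbitrary: \<sigma>)
  case (Forall z a)
  have "sfree (\<sigma>(z := z)) a" using Forall.prems(2) by simp
  then have "sfree (r \<circ> \<sigma>(z := z) \<circ> inv r) (rename r a)" by (rule Forall.IH[OF Forall.prems(1)])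
  then have "sfree ((r \<circ> \<sigma> \<circ> inv r)(r z := r z)) (rename r a)"
    by (simp only: conjugate_fun_upd[OF Forall.prems(1)])
  moreover have "\<forall>v\<in>fv (Forall (r z) (rename r a)). (r \<circ> \<sigma> \<circ> inv r) v \<noteq> r z"
    using Forall.prems by (auto simp: fv_rename bij_is_inj inj_eq)
  ultimately show ?case unfolding sfree.simps rename.simps by blast
next
  case (Just t X a)
  have "sfree (\<lambda>v. if v |\<in>| X then \<sigma> v else v) a" using Just.prems(2) by simp
  then have "sfree (r \<circ> (\<lambda>v. if v |\<in>| X then \<sigma> v else v) \<circ> inv r) (rename r a)"
    by (rule Just.IH[OF Just.prems(1)])
  then have "sfree (\<lambda>w. if w |\<in>| fimage r X then (r \<circ> \<sigma> \<circ> inv r) w else w) (rename r a)"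
    by (simp only: conjugate_restrict[OF Just.prems(1)])
  moreover have "\<forall>v\<in>fset (fimage r X). (r \<circ> \<sigma> \<circ> inv r) v \<notin> fv (rename r a) - fset (fimage r X)"
    using Just.prems by (auto simp: fv_rename bij_is_inj inj_eq)
  ultimately show ?case unfolding sfree.simps rename.simps by blast
qed auto

lemma sfree_if_fresh:
  "\<forall>v\<in>allvars a. \<sigma> v = v \<or> \<sigma> v \<notin> allvars a \<Longrightarrow> sfree \<sigma> a"
proof (induction a arbitrary: \<sigma>)
  case (Forall z a)
  have "sfree (\<sigma>(z := z)) a"
    by (rule Forall.IH) (use Forall.prems in auto)
  moreover have "\<forall>v\<in>fv a - {z}. \<sigma> v \<noteq> z"
    using Forall.prems fv_subset_allvars[of a] by fastforce
  ultimately show ?case by simp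
next
  case (Just t X a)
  have "sfree (\<lambda>v. if v |\<in>| X then \<sigma> v else v) a"
    by (rule Just.IH) (use Just.prems in auto)
  moreover have "\<forall>v\<in>fset X. \<sigma> v \<notin> fv a - fset X"
  proof
    fix v assume "v \<in> fset X"
    then have "\<sigma> v = v \<or> \<sigma> v \<notin> allvars (Just t X a)" using Just.prems by simp
    then show "\<sigma> v \<notin> fv a - fset X" using \<open>v \<in> fset X\<close> fv_subset_allvars[of a] by auto
  qed
  ultimately show ?case by simp
qed auto

lemma ax_rename: "ax \<phi> \<Longrightarrow> bij r \<Longrightarrow> ax (rename r \<phi>)"
proof (induction rule: ax.induct)
  case (A1_inst x y a)
  have conj: "r \<circ> id(x := y) \<circ> inv r = id(r x := r y)"
    using conjugate_fun_upd[OF A1_inst.prems, of id x y]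
      surj_iff[THEN iffD1, OF bij_is_surj[OF A1_inst.prems]]
    by simp
  have "sfree (id(r x := r y)) (rename r a)"
    using sfree_rename[OF A1_inst.prems A1_inst.hyps] by (simp only: conj)
  then show ?case
    using rename_substf[OF A1_inst.prems, of "id(x := y)" a] by (simp add: conj ax.A1_inst)
next
  case (A1_dist x a b)
  then have "r x \<notin> fv (rename r a)" by (auto simp: fv_rename bij_is_inj inj_eq)
  then show ?case by (simp add: ax.A1_dist)
next
  case (A2 y a X t)
  then have "r y \<notin> fv (rename r a)" "r y |\<notin>| fimage r X"
    by (auto simp: fv_rename bij_is_inj inj_eq)
  then show ?case by (simp add: ax.A2)
qed (auto simp: bij_is_inj inj_eq intro: ax.intros)

definition basifying :: "var set \<Rightarrow> (var \<Rightarrow> var) \<Rightarrow> bool" where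
  "basifying S r \<longleftrightarrow> bij r \<and> (\<forall>v\<in>S. isB (r v)) \<and> (\<forall>v\<in>S. isB v \<longrightarrow> r v = v)"

lemma basifying_mono: "basifying S r \<Longrightarrow> S' \<subseteq> S \<Longrightarrow> basifying S' r"
  by (auto simp: basifying_def)

text \<open>Swap each witness variable WV n of S with the basic variable BV (m + n), where m
  exceeds every index of a basic variable in S.\<close>
lemma basifying_exists:
  assumes "finite S"
  obtains r where "basifying S r"
proof -
  have "finite (BV -` S)"
    using assms by (rule finite_vimageI) (simp add: inj_def)
  then obtain m where m: "\<forall>k. BV k \<in> S \<longrightarrow> k < m"
    by (meson finite_nat_set_iff_bounded vimageI)
  define r where "r v = (case v of
      WV n \<Rightarrow> if WV n \<in> S then BV (m + n) else WV n
    | BV k \<Rightarrow> if m \<le> k \<and> WV (k - m) \<in> S then WV (k - m) else BV k)" for v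
  have "r (r v) = v" for v
    by (cases v) (auto simp: r_def)
  then have "bij r"
    by (intro o_bij[of r]) auto
  moreover have "isB (r v) \<and> (isB v \<longrightarrow> r v = v)" if "v \<in> S" for v
    using that m by (cases v) (auto simp: r_def isB_def)
  ultimately show thesis
    by (intro that) (auto simp: basifying_def)
qed

lemma rename_CSV_in_csfml:
  assumes cs: "const_spec CS" and vc: "variant_closed CS"
    and \<phi>: "\<phi> \<in> csfml (CSV CS)"
  obtains S where "finite S" "allvars \<phi> \<subseteq> S"
    and "\<And>r. basifying S r \<Longrightarrow> rename r \<phi> \<in> csfml CS"
proof -
  obtain c \<psi> \<sigma> where \<phi>_eq: "\<phi> = Just (JConst c) {||} (substf \<sigma> \<psi>)"
    and c\<psi>: "(c, \<psi>) \<in> CS" and rw: "replaceW \<sigma> \<psi>"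
    using \<phi> by (auto simp: csfml_def CSV_def)
  have basic_\<psi>: "basic \<psi>"
    using cs c\<psi> by (auto simp: const_spec_def)
  define S where "S = allvars \<phi> \<union> allvars \<psi>"
  have rename_in: "rename r \<phi> \<in> csfml CS" if r: "basifying S r" for r
  proof -
    have bij: "bij r" using r by (simp add: basifying_def)
    have fix_\<psi>: "r v = v" if "v \<in> allvars \<psi>" for v
      using r basic_\<psi> that by (auto simp: basifying_def S_def basic_def)
    have ren: "rename r (substf \<sigma> \<psi>) = substf (r \<circ> \<sigma>) \<psi>"
      using fix_\<psi> by (intro rename_substf_of_ident) blast
    have "basic (substf (r \<circ> \<sigma>) \<psi>)"
      unfolding ren[symmetric] using r by (intro basic_rename) (auto simp: basifying_def S_def \<phi>_eq)
    moreover have "inj_on (r \<circ> \<sigma>) (fv \<psi>)"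
      using rw bij_is_inj[OF bij] by (auto simp: replaceW_def intro: comp_inj_on inj_on_subset)
    moreover have "sfree (r \<circ> \<sigma>) \<psi>"
    proof (rule sfree_if_fresh, intro ballI)
      fix v assume v: "v \<in> allvars \<psi>"
      show "(r \<circ> \<sigma>) v = v \<or> (r \<circ> \<sigma>) v \<notin> allvars \<psi>"
      proof (cases "\<sigma> v = v")
        case True
        then show ?thesis using fix_\<psi> v by simp
      next
        case False
        then have "isW (\<sigma> v)" using rw by (auto simp: replaceW_def)
        then have "\<not> isB (\<sigma> v)" by (auto simp: isB_def isW_def)
        then have "r (\<sigma> v) \<notin> allvars \<psi>"
          using fix_\<psi> basic_\<psi> bij by (metis basic_def bij_is_inj inj_eq)
        then show ?thesis by simp
      qed
    qed
    ultimately have "variant \<psi> (substf (r \<circ> \<sigma>) \<psi>)"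
      using basic_\<psi> by (auto simp: variant_def)
    then have "(c, substf (r \<circ> \<sigma>) \<psi>) \<in> CS"
      using vc c\<psi> by (auto simp: variant_closed_def)
    then show ?thesis
      using ren by (auto simp: csfml_def \<phi>_eq)
  qed
  show thesis
    by (rule that[OF _ _ rename_in]) (auto simp: S_def finite_allvars)
qed

lemma prvCSV_rename:
  assumes cs: "const_spec CS" and vc: "variant_closed CS"
  shows "prvCSV CS \<phi> \<Longrightarrow>
    \<exists>S. finite S \<and> allvars \<phi> \<subseteq> S \<and> (\<forall>r. basifying S r \<longrightarrow> prvCS CS (rename r \<phi>))"
proof (induction rule: prv.induct)
  case (prv_ax \<phi>)
  then show ?case
    by (intro exI[of _ "allvars \<phi>"])
      (auto simp: basifying_def finite_allvars intro!: prv.prv_ax ax_rename basic_rename)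
next
  case (prv_cs \<phi>)
  then obtain S where "finite S" "allvars \<phi> \<subseteq> S"
    and "\<And>r. basifying S r \<Longrightarrow> rename r \<phi> \<in> csfml CS"
    using rename_CSV_in_csfml[OF cs vc] by metis
  then show ?case by (auto intro: prv.prv_cs)
next
  case (prv_mp \<phi> \<psi>)
  then obtain S1 S2 where "finite S1" "allvars (Imp \<phi> \<psi>) \<subseteq> S1" "finite S2"
    and S12: "\<forall>r. basifying S1 r \<longrightarrow> prvCS CS (Imp (rename r \<phi>) (rename r \<psi>))"
      "\<forall>r. basifying S2 r \<longrightarrow> prvCS CS (rename r \<phi>)"
    by auto
  moreover have "prvCS CS (rename r \<psi>)" if "basifying (S1 \<union> S2) r" for r
    using that basifying_mono[OF that, of S1] basifying_mono[OF that, of S2] S12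
    by (auto intro: prv.prv_mp)
  ultimately show ?case
    by (intro exI[of _ "S1 \<union> S2"]) auto
next
  case (prv_gen \<phi> x)
  then obtain S where S: "finite S" "allvars \<phi> \<subseteq> S"
    and prv: "\<forall>r. basifying S r \<longrightarrow> prvCS CS (rename r \<phi>)"
    by auto
  have "prvCS CS (rename r (Forall x \<phi>))" if r: "basifying (insert x S) r" for r
  proof -
    have "basic (rename r (Forall x \<phi>))"
      using r S by (intro basic_rename) (auto simp: basifying_def)
    with prv r show ?thesis
      by (auto intro: prv.prv_gen dest: basifying_mono)
  qed
  with S show ?case by (intro exI[of _ "insert x S"]) auto
qed

theorem mainTheorem9:
  assumes "const_spec CS" and "variant_closed CS"
    and "basic \<phi>" and "prvCSV CS \<phi>"
  shows "prvCS CS \<phi>"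
proof -
  obtain S where "finite S" and "allvars \<phi> \<subseteq> S"
    and prv: "\<forall>r. basifying S r \<longrightarrow> prvCS CS (rename r \<phi>)"
    using prvCSV_rename[OF assms(1,2,4)] by blast
  obtain r where r: "basifying S r"
    using basifying_exists[OF \<open>finite S\<close>] .
  have "rename r \<phi> = \<phi>"
    using r \<open>allvars \<phi> \<subseteq> S\<close> \<open>basic \<phi>\<close> by (intro rename_ident) (auto simp: basifying_def basic_def)
  with prv r show ?thesis by metis
qed

end
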